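(* Let $p$ be an odd prime and let $n,s$ be positive integers such that $2n/s\geq 3$ is an odd integer; put $q=p^n$, $d=p^s$. Fix $\mu\in\mathbb{F}_{q^2}\setminus\mathbb{F}_q$ such that $\mu^d=u_1+u_2\mu$ with $u_1,u_2\in\mathbb{F}_q$ and $u_2$ a $(d-1)$-th power in $\mathbb{F}_{q^2}$. Fix a partition $\mathbb{F}_q^*=\mathbb{F}_q^+\cup\mathbb{F}_q^-$ such that $a\in\mathbb{F}_q^+$ iff $-a\in\mathbb{F}_q^-$. Then \[ I^+=\{(a^d+a,\,x_1+x_2\mu): a,x_1\in\mathbb{F}_q,\ x_2\in\mathbb{F}_q^+\} \] is an independent set in $\mathcal{A}_{q^2,d}$, and likewise $I^-=\{(a^d+a,\,x_1+x_2\mu): a,x_1\in\mathbb{F}_q,\ x_2\in\mathbb{F}_q^-\}$ is an independent set in $\mathcal{A}_{q^2,d}$.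
   Context: The map $x\mapsto x^d+x$ is a bijection of $\mathbb{F}_{q^2}$. The graph $\mathcal{A}_{q^2,d}$ has vertex set $\mathbb{F}_{q^2}\times\mathbb{F}_{q^2}$; writing vertices as $(a^d+a,x)$ and $(b^d+b,y)$ with $a,b,x,y\in\mathbb{F}_{q^2}$ (uniquely), two distinct vertices are adjacent iff $a^db+ab^d=x+y$. $\mathbb{F}_q$ is the subfield of $\mathbb{F}_{q^2}$ of order $q$. *)

theory Defs
  imports "HOL-Computational_Algebra.Primes"
begin

definition subfield_of_order :: "nat \<Rightarrow> ('a::field) set" where
  "subfield_of_order q = {x. x ^ q = x}"

text \<open>Adjacency in the graph A_{q^2,d}: vertices are pairs (u,x); writing
  u = a^d + a and v = b^d + b (unique since x \<mapsto> x^d + x is a bijection),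
  distinct vertices (u,x),(v,y) are adjacent iff a^d b + a b^d = x + y.\<close>
definition A_adj :: "nat \<Rightarrow> ('a::field \<times> 'a) \<Rightarrow> ('a \<times> 'a) \<Rightarrow> bool" where
  "A_adj d P Q \<longleftrightarrow> P \<noteq> Q \<and>
     (\<exists>a b. fst P = a ^ d + a \<and> fst Q = b ^ d + b \<and> a ^ d * b + a * b ^ d = snd P + snd Q)"

definition A_independent :: "nat \<Rightarrow> ('a::field \<times> 'a) set \<Rightarrow> bool" where
  "A_independent d I \<longleftrightarrow> (\<forall>P\<in>I. \<forall>Q\<in>I. \<not> A_adj d P Q)"

end

theory Submission
  imports Defs "HOL-Number_Theory.Residues"
begin

text \<open>Since \<open>2n/s\<close> is odd, \<open>x \<mapsto> x^d + x\<close> is injective: if \<open>c^d = -c\<close>, applying the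
  Frobenius \<open>x \<mapsto> x^d\<close> another \<open>2n/s - 1\<close> times gives \<open>c = c^(q^2) = -c\<close>, so \<open>c = 0\<close>.
  Hence adjacency of \<open>(a^d + a, x1 + x2 \<mu>)\<close> and \<open>(b^d + b, y1 + y2 \<mu>)\<close> means
  \<open>a^d b + a b^d = (x1 + y1) + (x2 + y2) \<mu>\<close>. For \<open>a, b, x1, y1, x2, y2\<close> in \<open>F_q\<close> the left side
  lies in \<open>F_q\<close>, and \<open>x2 + y2 \<noteq> 0\<close> because \<open>F_q^+\<close> (and \<open>F_q^-\<close>) contains no pair \<open>a, -a\<close>;
  so \<open>\<mu> \<in> F_q\<close>, a contradiction.\<close>

text \<open>The library version \<open>finite_field_power_card_eq_same\<close> needs the sort \<open>finite_field\<close>, which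
  a type variable of sort \<open>{field,finite}\<close> cannot be shown to have.\<close>
lemma power_card_eq_self:
  fixes x :: "'a::{field,finite}"
  shows "x ^ card (UNIV :: 'a set) = x"
proof (cases "x = 0")
  case False
  have "(\<Prod>y\<in>UNIV-{0}. x * y) = x ^ (card (UNIV :: 'a set) - 1) * \<Prod>(UNIV-{0})"
    by (simp add: prod.distrib mult_ac)
  moreover have "(\<Prod>y\<in>UNIV-{0}. x * y) = (\<Prod>y\<in>UNIV-{0}. y)"
    by (rule prod.reindex_bij_witness[of _ "\<lambda>y. y / x" "\<lambda>y. x * y"]) (use False in auto)
  ultimately have "x ^ (card (UNIV :: 'a set) - 1) = 1"
    by simp
  moreover have "x ^ card (UNIV :: 'a set) = x * x ^ (card (UNIV :: 'a set) - 1)"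
    using finite_UNIV_card_ge_0[where ?'a = 'a] by (simp add: power_eq_if)
  ultimately show ?thesis
    by simp
qed (use finite_UNIV_card_ge_0[where ?'a = 'a] in auto)

lemma CHAR_eq_prime_if_card_eq_power:
  assumes "prime p" and "card (UNIV :: 'a::{field,finite} set) = p ^ k"
  shows "CHAR('a) = p"
proof -
  have "prime CHAR('a)"
    by (rule prime_CHAR_semidom, rule finite_imp_CHAR_pos) simp
  moreover have "CHAR('a) dvd p ^ k"
    using CHAR_dvd_CARD[where ?'a = 'a] assms(2) by simp
  ultimately show ?thesis
    using assms(1) prime_dvd_power primes_dvd_imp_eq by blast
qed

lemma power_iterate_eq_if_power_eq_minus:
  fixes c :: "'a::comm_ring_1"
  assumes "odd d" and "c ^ d = - c"
  shows "c ^ (d ^ j) = (-1) ^ j * c"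
proof (induction j)
  case (Suc j)
  have "c ^ (d ^ Suc j) = ((-1) ^ j * c) ^ d"
    by (simp add: Suc.IH power_mult mult.commute[of d])
  also have "\<dots> = (-1) ^ Suc j * c"
    using assms by (simp add: power_mult_distrib minus_one_power_iff flip: power_mult)
  finally show ?case .
qed simp

lemma inj_power_plus_self:
  fixes d :: nat
  assumes "odd CHAR('a::{field,finite})" and "d = CHAR('a) ^ s"
    and "card (UNIV :: 'a set) = d ^ k" and "odd k"
  shows "inj (\<lambda>x::'a. x ^ d + x)"
proof (rule injI, rule ccontr)
  fix a b :: 'a
  assume eq: "a ^ d + a = b ^ d + b" and "a \<noteq> b"
  have prime_char: "prime CHAR('a)"
    by (rule prime_CHAR_semidom, rule finite_imp_CHAR_pos) simp
  have odd_d: "odd d"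
    using assms(1,2) by simp
  have frobenius_diff: "(a - b) ^ d = a ^ d - b ^ d"
    using freshmans_dream'[OF prime_char assms(2), of "a - b" b] by (simp add: algebra_simps)
  have "(a - b) ^ d = - (a - b)"
    using eq by (simp add: frobenius_diff algebra_simps)
  then have "(a - b) ^ card (UNIV :: 'a set) = - (a - b)"
    using power_iterate_eq_if_power_eq_minus[OF odd_d, of "a - b" k] assms(3,4) by simp
  then have "2 * (a - b) = 0"
    by (simp add: power_card_eq_self)
  moreover have "\<not> CHAR('a) dvd 2"
    using primes_dvd_imp_eq[OF prime_char two_is_prime_nat] assms(1) by auto
  then have "(2::'a) \<noteq> 0"
    using of_nat_eq_0_iff_char_dvd[of 2, where ?'a = 'a] by simp
  ultimately show False
    using \<open>a \<noteq> b\<close> by simp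
qed

lemma A_adj_power_plus_self:
  fixes a b x y :: "'a::field"
  assumes "inj (\<lambda>x::'a. x ^ d + x)" and "A_adj d (a ^ d + a, x) (b ^ d + b, y)"
  shows "a ^ d * b + a * b ^ d = x + y"
proof -
  obtain a' b' where "a ^ d + a = a' ^ d + a'" "b ^ d + b = b' ^ d + b'"
    and adj: "a' ^ d * b' + a' * b' ^ d = x + y"
    using assms(2) unfolding A_adj_def by auto
  then have "a = a'" and "b = b'"
    by (auto intro: injD[OF assms(1)])
  then show ?thesis
    using adj by simp
qed

lemma subfield_of_order_power: "x \<in> subfield_of_order q \<Longrightarrow> x ^ k \<in> subfield_of_order q"
  by (simp add: subfield_of_order_def flip: power_mult) (metis mult.commute power_mult)

lemma subfield_of_order_mult:
  "x \<in> subfield_of_order q \<Longrightarrow> y \<in> subfield_of_order q \<Longrightarrow> x * y \<in> subfield_of_order q"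
  by (simp add: subfield_of_order_def power_mult_distrib)

lemma subfield_of_order_divide:
  "x \<in> subfield_of_order q \<Longrightarrow> y \<in> subfield_of_order q \<Longrightarrow> x / y \<in> subfield_of_order q"
  by (simp add: subfield_of_order_def power_divide)

lemma subfield_of_order_add:
  assumes "prime CHAR('a::field)" and "q = CHAR('a) ^ n"
  shows "x \<in> subfield_of_order q \<Longrightarrow> y \<in> subfield_of_order q \<Longrightarrow> x + y \<in> (subfield_of_order q :: 'a set)"
  by (simp add: subfield_of_order_def freshmans_dream'[OF assms])

lemma subfield_of_order_diff:
  assumes "prime CHAR('a::field)" and "q = CHAR('a) ^ n"
  shows "x \<in> subfield_of_order q \<Longrightarrow> y \<in> subfield_of_order q \<Longrightarrow> x - y \<in> (subfield_of_order q :: 'a set)"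
  using freshmans_dream'[OF assms, of "x - y" y] by (simp add: subfield_of_order_def eq_diff_eq)

lemma A_independent_over_subfield:
  fixes q n d :: nat and \<mu> :: "'a::field" and S :: "'a set"
  defines "F \<equiv> subfield_of_order q"
  assumes "prime CHAR('a)" and "q = CHAR('a) ^ n"
    and "inj (\<lambda>x::'a. x ^ d + x)" and "\<mu> \<notin> F"
    and "S \<subseteq> F" and "\<And>x y. x \<in> S \<Longrightarrow> y \<in> S \<Longrightarrow> x + y \<noteq> 0"
  shows "A_independent d {(a ^ d + a, x1 + x2 * \<mu>) | a x1 x2. a \<in> F \<and> x1 \<in> F \<and> x2 \<in> S}"
  unfolding A_independent_def
proof (intro ballI notI, elim CollectE exE conjE)
  fix P Q a x1 x2 b y1 y2
  assume "P = (a ^ d + a, x1 + x2 * \<mu>)" "Q = (b ^ d + b, y1 + y2 * \<mu>)" "A_adj d P Q"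
    and F_elems: "a \<in> F" "x1 \<in> F" "b \<in> F" "y1 \<in> F"
    and "x2 \<in> S" "y2 \<in> S"
  then have "a ^ d * b + a * b ^ d = (x1 + x2 * \<mu>) + (y1 + y2 * \<mu>)"
    using A_adj_power_plus_self[OF assms(4)] by blast
  then have "a ^ d * b + a * b ^ d = (x1 + y1) + (x2 + y2) * \<mu>"
    by (simp add: algebra_simps)
  moreover have "x2 + y2 \<noteq> 0"
    using \<open>x2 \<in> S\<close> \<open>y2 \<in> S\<close> assms(7) by blast
  moreover have "x2 + y2 \<in> F"
    using \<open>x2 \<in> S\<close> \<open>y2 \<in> S\<close> assms(6) subfield_of_order_add[OF assms(2,3)]
    unfolding F_def by blast
  ultimately have "\<mu> = (a ^ d * b + a * b ^ d - (x1 + y1)) / (x2 + y2)"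
    by (simp add: field_simps)
  also have "\<dots> \<in> F"
  proof -
    have "a ^ d * b + a * b ^ d - (x1 + y1) \<in> F"
      using F_elems unfolding F_def
      by (intro subfield_of_order_diff[OF assms(2,3)] subfield_of_order_add[OF assms(2,3)]
          subfield_of_order_mult subfield_of_order_power)
    then show ?thesis
      using \<open>x2 + y2 \<in> F\<close> unfolding F_def by (rule subfield_of_order_divide)
  qed
  finally show False
    using assms(5) by simp
qed

lemma sum_ne_zero_if_sign_partition:
  fixes P M :: "'a::ab_group_add set"
  assumes "\<forall>a \<in> A. a \<in> P \<longleftrightarrow> - a \<in> M" and "P \<union> M = A" and "P \<inter> M = {}"
  shows sum_ne_zero_if_sign_partition_pos: "x \<in> P \<Longrightarrow> y \<in> P \<Longrightarrow> x + y \<noteq> 0"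
    and sum_ne_zero_if_sign_partition_neg: "x \<in> M \<Longrightarrow> y \<in> M \<Longrightarrow> x + y \<noteq> 0"
  using assms by (metis Int_iff Un_iff add_eq_0_iff empty_iff)+

theorem lemma7:
  fixes p n s :: nat and \<mu> u1 u2 :: "'a::{field,finite}"
    and Fplus Fminus :: "'a set"
  assumes "prime p" and "odd p" and "n > 0" and "s > 0"
    and "s dvd 2 * n" and "odd (2 * n div s)" and "2 * n div s \<ge> 3"
    and "card (UNIV :: 'a set) = (p ^ n) ^ 2"
    and "\<mu> \<notin> subfield_of_order (p ^ n)"
    and "u1 \<in> subfield_of_order (p ^ n)" and "u2 \<in> subfield_of_order (p ^ n)"
    and "\<mu> ^ (p ^ s) = u1 + u2 * \<mu>"
    and "\<exists>w::'a. u2 = w ^ (p ^ s - 1)"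
    and "Fplus \<union> Fminus = subfield_of_order (p ^ n) - {0}"
    and "Fplus \<inter> Fminus = {}"
    and "\<forall>a \<in> subfield_of_order (p ^ n) - {0}. a \<in> Fplus \<longleftrightarrow> - a \<in> Fminus"
  shows "A_independent (p ^ s)
           {(a ^ (p ^ s) + a, x1 + x2 * \<mu>) | a x1 x2.
              a \<in> subfield_of_order (p ^ n) \<and> x1 \<in> subfield_of_order (p ^ n) \<and> x2 \<in> Fplus}
       \<and> A_independent (p ^ s)
           {(a ^ (p ^ s) + a, x1 + x2 * \<mu>) | a x1 x2.
              a \<in> subfield_of_order (p ^ n) \<and> x1 \<in> subfield_of_order (p ^ n) \<and> x2 \<in> Fminus}"
proof -
  obtain k where k: "2 * n = s * k"
    using assms(5) by blast
  have card_eq: "card (UNIV :: 'a set) = (p ^ s) ^ k"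
    using assms(8) k by (metis power_mult mult.commute)
  have char: "CHAR('a) = p"
    using CHAR_eq_prime_if_card_eq_power[OF assms(1), of "s * k"] card_eq by (simp add: power_mult)
  have prime_char: "prime CHAR('a)" and q_eq: "p ^ n = CHAR('a) ^ n"
    using char assms(1) by simp_all
  have "inj (\<lambda>x::'a. x ^ (p ^ s) + x)"
    by (rule inj_power_plus_self[of "p ^ s" s k]) (use card_eq assms(2,4,6) k char in simp_all)
  note independent = A_independent_over_subfield[OF prime_char q_eq this assms(9)]
  have "Fplus \<subseteq> subfield_of_order (p ^ n)" and "Fminus \<subseteq> subfield_of_order (p ^ n)"
    using assms(14) by auto
  then show ?thesis
    using independent[OF _ sum_ne_zero_if_sign_partition_pos[OF assms(16,14,15)]]
      independent[OF _ sum_ne_zero_if_sign_partition_neg[OF assms(16,14,15)]]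
    by simp
qed

end
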